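(* For every formula $\phi$, if $\vdash_{\mathsf{BB'IW}}\phi$, then $\phi$ is $\Lambda_{\mathrm{NF}}$-inhabited.
   Context: Formulas are built from propositional atoms with $\to$. $\vdash_{\mathsf{BB'IW}}\phi$ means that there is a combinator, built by application from the constants ${\sf B},{\sf B'},{\sf I},{\sf W}$, of type $\phi$, where the constants receive as types all instances of, respectively, $(\chi\to\psi)\to((\phi\to\chi)\to(\phi\to\psi))$, $(\phi\to\chi)\to((\chi\to\psi)\to(\phi\to\psi))$, $\phi\to\phi$, $(\phi\to(\phi\to\chi))\to(\phi\to\chi)$, and an application $MN$ has type $\psi$ when $M$ has type $\chi\to\psi$ and $N$ type $\chi$ (equivalently, $\phi$ is derivable from these axiom schemes by modus ponens). Let $\mathcal X$ be a countably infinite set of variables with an injective map $\mathcal O:\mathcal X\to\mathbb N$; write $x<y$ iff $\mathcal O(x)<\mathcal O(y)$. Terms are terms of pure $\lambda$-calculus over $\mathcal X$, not identified up to $\alpha$-conversion; two distinct $\lambda$'s never bind the same variable and no variable is both free and bound in a term. HRM terms: every variable; $\lambda x.M$ if $M$ is HRM and $x$ is the greatest free variable of $M$; $(MN)$ if $M,N$ are HRM and for each free variable $x$ of $M$ there is a free variable $y$ of $N$ with $x\le y$. Fix $\Omega$ from variables to formulas with $\Omega^{-1}(\phi)$ infinite for all $\phi$. Typing: $x:\Omega(x)$; if $x:\chi$, $M:\psi$ and $\lambda x.M$ is HRM then $\lambda x.M:\chi\to\psi$; if $M:\chi\to\psi$, $N:\chi$, $(MN)$ HRM then $(MN):\psi$.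 $\Lambda_{\mathrm{NF}}$ is the set of typed terms in $\beta$-normal form; $\phi$ is $\Lambda_{\mathrm{NF}}$-inhabited if some closed term of $\Lambda_{\mathrm{NF}}$ has type $\phi$. *)

theory Defs
  imports Main
begin

datatype 'a form = Atom 'a | Imp "'a form" "'a form"

datatype comb = CB | CB' | CI | CW | CApp comb comb

inductive ctype :: "comb \<Rightarrow> 'a form \<Rightarrow> bool" where
  ctB: "ctype CB (Imp (Imp chi psi) (Imp (Imp phi chi) (Imp phi psi)))"
| ctB': "ctype CB' (Imp (Imp phi chi) (Imp (Imp chi psi) (Imp phi psi)))"
| ctI: "ctype CI (Imp phi phi)"
| ctW: "ctype CW (Imp (Imp phi (Imp phi chi)) (Imp phi chi))"
| ctApp: "ctype M (Imp chi psi) \<Longrightarrow> ctype N chi \<Longrightarrow> ctype (CApp M N) psi"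

definition BBIW_provable :: "'a form \<Rightarrow> bool" where
  "BBIW_provable phi \<longleftrightarrow> (\<exists>c. ctype c phi)"

section \<open>Lambda terms (not identified up to alpha)\<close>

datatype 'v lterm = Var 'v | Lam 'v "'v lterm" | App "'v lterm" "'v lterm"

fun fv :: "'v lterm \<Rightarrow> 'v set" where
  "fv (Var x) = {x}"
| "fv (Lam x M) = fv M - {x}"
| "fv (App M N) = fv M \<union> fv N"

fun bvs :: "'v lterm \<Rightarrow> 'v list" where
  "bvs (Var x) = []"
| "bvs (Lam x M) = x # bvs M"
| "bvs (App M N) = bvs M @ bvs N"

text \<open>Variable convention: distinct lambdas bind distinct variables,
  and no variable is both free and bound.\<close>
definition wf_term :: "'v lterm \<Rightarrow> bool" where
  "wf_term M \<longleftrightarrow> distinct (bvs M) \<and> fv M \<inter> set (bvs M) = {}"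

fun HRM :: "('v \<Rightarrow> nat) \<Rightarrow> 'v lterm \<Rightarrow> bool" where
  "HRM ord (Var x) = True"
| "HRM ord (Lam x M) = (HRM ord M \<and> x \<in> fv M \<and> (\<forall>y\<in>fv M. ord y \<le> ord x))"
| "HRM ord (App M N) = (HRM ord M \<and> HRM ord N \<and> (\<forall>x\<in>fv M. \<exists>y\<in>fv N. ord x \<le> ord y))"

inductive typed :: "('v \<Rightarrow> nat) \<Rightarrow> ('v \<Rightarrow> 'a form) \<Rightarrow> 'v lterm \<Rightarrow> 'a form \<Rightarrow> bool"
  for ord :: "'v \<Rightarrow> nat" and Omega :: "'v \<Rightarrow> 'a form" where
  tVar: "typed ord Omega (Var x) (Omega x)"
| tLam: "typed ord Omega M psi \<Longrightarrow> HRM ord (Lam x M) \<Longrightarrow>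
         typed ord Omega (Lam x M) (Imp (Omega x) psi)"
| tApp: "typed ord Omega M (Imp chi psi) \<Longrightarrow> typed ord Omega N chi \<Longrightarrow> HRM ord (App M N) \<Longrightarrow>
         typed ord Omega (App M N) psi"

fun beta_normal :: "'v lterm \<Rightarrow> bool" where
  "beta_normal (Var x) = True"
| "beta_normal (Lam x M) = beta_normal M"
| "beta_normal (App (Lam x M) N) = False"
| "beta_normal (App (Var x) N) = beta_normal N"
| "beta_normal (App (App M1 M2) N) = (beta_normal (App M1 M2) \<and> beta_normal N)"

definition NF_inhabited :: "('v \<Rightarrow> nat) \<Rightarrow> ('v \<Rightarrow> 'a form) \<Rightarrow> 'a form \<Rightarrow> bool" where
  "NF_inhabited ord Omega phi \<longleftrightarrow>
     (\<exists>M. wf_term M \<and> beta_normal M \<and> fv M = {} \<and> typed ord Omega M phi)"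

end

theory Submission
  imports Defs
begin

text \<open>Each axiom scheme of BB'IW is the type of a closed normal HRM term
  (\<open>\<lambda>xyz. x (y z)\<close>, \<open>\<lambda>xyz. y (x z)\<close>, \<open>\<lambda>x. x\<close>, \<open>\<lambda>xy. x y y\<close>), so it suffices to show that the
  normal form of an application of two closed normal HRM terms is again HRM. We normalise by
  hereditary substitution on Church-style de Bruijn terms, where the recursion is on the type
  of the substituted variable. In de Bruijn form HRM says that every abstraction uses index 0
  and that every free index of a function part is bounded below by a free index of its
  argument (more recently bound means larger in the variable order); this is preserved when
  \<open>u\<close> is substituted for \<open>i\<close>, provided every free index of the term above \<open>i\<close> is dominated by
  a free index of \<open>u\<close>. Finally the normal de Bruijn term is named by choosing, for every
  binder, a variable of the right type whose order exceeds those of all variables in scope;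
  this exists since every type has infinitely many variables and \<open>ord\<close> is injective.\<close>

datatype 'a dbterm = DVar nat | DLam "'a form" "'a dbterm" | DApp "'a dbterm" "'a dbterm"

fun dfv :: "'a dbterm \<Rightarrow> nat set" where
  "dfv (DVar j) = {j}"
| "dfv (DLam S t) = {w. Suc w \<in> dfv t}"
| "dfv (DApp a b) = dfv a \<union> dfv b"

inductive dtyped :: "(nat \<Rightarrow> 'a form) \<Rightarrow> 'a dbterm \<Rightarrow> 'a form \<Rightarrow> bool" where
  dtVar: "dtyped G (DVar j) (G j)"
| dtLam: "dtyped (case_nat S G) t T \<Longrightarrow> dtyped G (DLam S t) (Imp S T)"
| dtApp: "dtyped G a (Imp A B) \<Longrightarrow> dtyped G b A \<Longrightarrow> dtyped G (DApp a b) B"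

inductive_cases dtyped_DVarE: "dtyped G (DVar j) T"
inductive_cases dtyped_DLamE: "dtyped G (DLam S t) T"
inductive_cases dtyped_DAppE: "dtyped G (DApp a b) T"

lemma dtyped_DVar_eq: "G j = T \<Longrightarrow> dtyped G (DVar j) T"
  using dtVar by metis

fun is_DLam :: "'a dbterm \<Rightarrow> bool" where
  "is_DLam (DLam S t) = True"
| "is_DLam _ = False"

fun dnormal :: "'a dbterm \<Rightarrow> bool" where
  "dnormal (DVar j) = True"
| "dnormal (DLam S t) = dnormal t"
| "dnormal (DApp a b) = (dnormal a \<and> dnormal b \<and> \<not> is_DLam a)"

fun dHRM :: "'a dbterm \<Rightarrow> bool" where
  "dHRM (DVar j) = True"
| "dHRM (DLam S t) = (dHRM t \<and> 0 \<in> dfv t)"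
| "dHRM (DApp a b) = (dHRM a \<and> dHRM b \<and> (\<forall>w\<in>dfv a. \<exists>k\<in>dfv b. k \<le> w))"

fun lift :: "nat \<Rightarrow> nat \<Rightarrow> 'a dbterm \<Rightarrow> 'a dbterm" where
  "lift n k (DVar j) = DVar (if j < k then j else j + n)"
| "lift n k (DLam S t) = DLam S (lift n (Suc k) t)"
| "lift n k (DApp a b) = DApp (lift n k a) (lift n k b)"

lemma dfv_lift: "dfv (lift n k t) = (\<lambda>j. if j < k then j else j + n) ` dfv t"
proof (induct t arbitrary: k)
  case (DLam S t)
  show ?case
  proof (rule set_eqI, rule iffI)
    fix w assume "w \<in> dfv (lift n k (DLam S t))"
    then have "Suc w \<in> (\<lambda>j. if j < Suc k then j else j + n) ` dfv t" using DLam[of "Suc k"] by simp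
    then obtain j where j: "j \<in> dfv t" "Suc w = (if j < Suc k then j else j + n)" by blast
    then obtain j' where "j = Suc j'" by (cases j) auto
    with j show "w \<in> (\<lambda>j. if j < k then j else j + n) ` dfv (DLam S t)"
      by (intro image_eqI[of _ _ j']) (auto split: if_splits)
  next
    fix w assume "w \<in> (\<lambda>j. if j < k then j else j + n) ` dfv (DLam S t)"
    then obtain j where j: "Suc j \<in> dfv t" "w = (if j < k then j else j + n)" by auto
    then have "Suc w \<in> (\<lambda>j. if j < Suc k then j else j + n) ` dfv t"
      by (intro image_eqI[of _ _ "Suc j"]) auto
    then show "w \<in> dfv (lift n k (DLam S t))" using DLam[of "Suc k"] by simp
  qed
qed auto

lemma dtyped_lift:
  "dtyped G t T \<Longrightarrow> (\<forall>j. G' (if j < k then j else j + n) = G j) \<Longrightarrow> dtyped G' (lift n k t) T"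
proof (induct arbitrary: G' k rule: dtyped.induct)
  case (dtVar G j) then show ?case by (metis lift.simps(1) dtyped.dtVar)
next
  case (dtLam S G t T)
  have "\<forall>j. case_nat S G' (if j < Suc k then j else j + n) = case_nat S G j"
  proof
    fix j show "case_nat S G' (if j < Suc k then j else j + n) = case_nat S G j"
      using dtLam(3)[rule_format, of "j - 1"] by (cases j) (auto split: if_splits)
  qed
  then show ?case using dtLam(2) by (auto intro: dtyped.dtLam)
next
  case (dtApp G a A B b) then show ?case by (metis lift.simps(3) dtyped.dtApp)
qed

lemma is_DLam_lift: "is_DLam (lift n k t) = is_DLam t"
  by (cases t) auto

lemma dnormal_lift: "dnormal t \<Longrightarrow> dnormal (lift n k t)"
  by (induct t arbitrary: k) (auto simp: is_DLam_lift)

lemma dHRM_lift: "dHRM t \<Longrightarrow> dHRM (lift n k t)"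
proof (induct t arbitrary: k)
  case (DLam S t) then show ?case by (auto simp: dfv_lift image_iff)
next
  case (DApp a b)
  have "\<exists>k'\<in>dfv (lift n k b). k' \<le> w" if "w \<in> dfv (lift n k a)" for w
  proof -
    from that obtain j where j: "j \<in> dfv a" "w = (if j < k then j else j + n)"
      by (auto simp: dfv_lift)
    with DApp obtain k0 where "k0 \<in> dfv b" "k0 \<le> j" by auto
    then show ?thesis using j
      by (intro bexI[of _ "if k0 < k then k0 else k0 + n"]) (auto simp: dfv_lift)
  qed
  then show ?case using DApp by auto
qed auto

fun head_var :: "'a dbterm \<Rightarrow> nat option" where
  "head_var (DVar j) = Some j"
| "head_var (DLam S t) = None"
| "head_var (DApp a b) = head_var a"

fun num_args :: "'a dbterm \<Rightarrow> nat" where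
  "num_args (DApp a b) = Suc (num_args a)"
| "num_args _ = 0"

fun codom :: "'a form \<Rightarrow> 'a form" where
  "codom (Imp A B) = B"
| "codom (Atom x) = Atom x"

definition result_type :: "'a form \<Rightarrow> nat \<Rightarrow> 'a form" where
  "result_type T n = (codom ^^ n) T"

lemma size_codom: "size (codom T) \<le> size T"
  by (cases T) auto

lemma size_result_type: "size (result_type T n) \<le> size T"
  unfolding result_type_def by (induct n) (auto intro: order_trans[OF size_codom])

lemma dtyped_head_var:
  "dtyped G t S \<Longrightarrow> head_var t = Some i \<Longrightarrow> S = result_type (G i) (num_args t)"
proof (induct rule: dtyped.induct)
  case (dtApp G a A B b)
  then have "Imp A B = result_type (G i) (num_args a)" by simp
  then show ?case by (simp add: result_type_def) (metis codom.simps(1))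
qed (auto simp: result_type_def)

text \<open>A redex created by substituting \<open>u :: T\<close> into head position is reduced by a substitution
  at the domain of the head's type, a strict subformula of \<open>T\<close>; this gives termination. The last
  equation of \<open>happ\<close> only matters for ill-typed arguments.\<close>

function (sequential) hsubst :: "'a form \<Rightarrow> 'a dbterm \<Rightarrow> nat \<Rightarrow> 'a dbterm \<Rightarrow> 'a dbterm"
  and happ :: "'a form \<Rightarrow> 'a dbterm \<Rightarrow> 'a dbterm \<Rightarrow> 'a dbterm" where
  "hsubst T (DVar j) i u = (if j < i then DVar j else if j = i then lift i 0 u else DVar (j - 1))"
| "hsubst T (DLam S t) i u = DLam S (hsubst T t (Suc i) u)"
| "hsubst T (DApp t1 t2) i u = (if head_var t1 = Some i
      then happ (result_type T (num_args t1)) (hsubst T t1 i u) (hsubst T t2 i u)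
      else DApp (hsubst T t1 i u) (hsubst T t2 i u))"
| "happ (Imp A B) (DLam S b) a = hsubst A b 0 a"
| "happ T f a = (if is_DLam f then f else DApp f a)"
  by pat_completeness auto
termination
  by (relation "inv_image (less_than <*lex*> less_than <*lex*> less_than)
     (\<lambda>x. case x of Inl (T, t, _, _) \<Rightarrow> (size T, 1::nat, size t) | Inr (T, _, _) \<Rightarrow> (size T, 0, 0))")
    (auto simp: le_neq_implies_less size_result_type)

lemma not_is_DLam_hsubst: "head_var t \<noteq> Some i \<Longrightarrow> \<not> is_DLam t \<Longrightarrow> \<not> is_DLam (hsubst T t i u)"
  by (cases t) auto

definition subst_compatible :: "'a dbterm \<Rightarrow> nat \<Rightarrow> 'a dbterm \<Rightarrow> bool" where
  "subst_compatible t i u \<longleftrightarrow> (\<forall>w\<in>dfv t. i < w \<longrightarrow> (\<exists>k\<in>dfv u. k + i + 1 \<le> w))"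

definition fv_subst :: "'a dbterm \<Rightarrow> nat \<Rightarrow> 'a dbterm \<Rightarrow> nat set" where
  "fv_subst t i u = {w. (w < i \<and> w \<in> dfv t) \<or> (i \<le> w \<and> Suc w \<in> dfv t)
     \<or> (i \<in> dfv t \<and> i \<le> w \<and> w - i \<in> dfv u)}"

lemma subst_compatible_DApp:
  "subst_compatible (DApp t1 t2) i u \<Longrightarrow> subst_compatible t1 i u \<and> subst_compatible t2 i u"
  by (auto simp: subst_compatible_def)

lemma fv_subst_DApp: "fv_subst (DApp t1 t2) i u = fv_subst t1 i u \<union> fv_subst t2 i u"
  by (auto simp: fv_subst_def)

lemma dHRM_app_cond_fv_subst:
  assumes h: "dHRM (DApp t1 t2)" and c: "subst_compatible (DApp t1 t2) i u"
  shows "\<forall>w\<in>fv_subst t1 i u. \<exists>k\<in>fv_subst t2 i u. k \<le> w"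
proof
  fix w assume w: "w \<in> fv_subst t1 i u"
  have hc: "\<forall>w\<in>dfv t1. \<exists>k\<in>dfv t2. k \<le> w" using h by simp
  consider "w < i" "w \<in> dfv t1" | "i \<le> w" "Suc w \<in> dfv t1" | "i \<in> dfv t1" "i \<le> w" "w - i \<in> dfv u"
    using w unfolding fv_subst_def by blast
  then show "\<exists>k\<in>fv_subst t2 i u. k \<le> w"
  proof cases
    case 1
    then obtain k where "k \<in> dfv t2" "k \<le> w" using hc by blast
    then show ?thesis using 1 unfolding fv_subst_def by (intro bexI[of _ k]) auto
  next
    case 2
    then obtain k where k: "k \<in> dfv t2" "k \<le> Suc w" using hc by blast
    consider "k < i" | "k = i" | "i < k" by linarith
    then show ?thesis
    proof cases
      case 1 then show ?thesis using k 2 unfolding fv_subst_def by (intro bexI[of _ k]) auto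
    next
      case 2
      have "Suc w \<in> dfv (DApp t1 t2)" "i < Suc w" using \<open>i \<le> w\<close> \<open>Suc w \<in> dfv t1\<close> by auto
      then obtain k' where "k' \<in> dfv u" "k' + i + 1 \<le> Suc w" using c unfolding subst_compatible_def by blast
      then show ?thesis using 2 k unfolding fv_subst_def by (intro bexI[of _ "k' + i"]) auto
    next
      case 3
      then obtain k0 where "k = Suc k0" "i \<le> k0" by (cases k) auto
      then show ?thesis using k unfolding fv_subst_def by (intro bexI[of _ k0]) auto
    qed
  next
    case 3
    then obtain k where k: "k \<in> dfv t2" "k \<le> i" using hc by blast
    show ?thesis
    proof (cases "k < i")
      case True then show ?thesis using k 3 unfolding fv_subst_def by (intro bexI[of _ k]) auto
    next
      case False
      then have "k = i" using k by simp
      then show ?thesis using k 3 unfolding fv_subst_def by (intro bexI[of _ w]) auto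
    qed
  qed
qed

text \<open>The invariants of \<open>hsubst\<close> and \<open>happ\<close>, as predicates so that they can be proved by the
  mutual induction of the two functions. In \<open>hsubst_sound\<close>, \<open>D\<close> is the context \<open>G\<close> with entry \<open>i\<close>
  removed and \<open>D0\<close> the part of \<open>D\<close> from \<open>i\<close> on, in which \<open>u\<close> is typed.\<close>

definition hsubst_sound :: "'a form \<Rightarrow> 'a dbterm \<Rightarrow> nat \<Rightarrow> 'a dbterm \<Rightarrow> bool" where
  "hsubst_sound T t i u \<longleftrightarrow> (\<forall>G D D0 S. dtyped G t S \<longrightarrow> G i = T
     \<longrightarrow> (\<forall>j. D j = G (if j < i then j else Suc j)) \<longrightarrow> (\<forall>j. D (j + i) = D0 j)
     \<longrightarrow> dtyped D0 u T \<longrightarrow> dnormal t \<longrightarrow> dnormal u \<longrightarrow> dHRM t \<longrightarrow> dHRM u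
     \<longrightarrow> subst_compatible t i u \<longrightarrow>
     dtyped D (hsubst T t i u) S \<and> dnormal (hsubst T t i u) \<and> dHRM (hsubst T t i u)
     \<and> dfv (hsubst T t i u) = fv_subst t i u)"

definition happ_sound :: "'a form \<Rightarrow> 'a dbterm \<Rightarrow> 'a dbterm \<Rightarrow> bool" where
  "happ_sound T f a \<longleftrightarrow> (\<forall>D A B. T = Imp A B \<longrightarrow> dtyped D f T \<longrightarrow> dtyped D a A
     \<longrightarrow> dnormal f \<longrightarrow> dnormal a \<longrightarrow> dHRM f \<longrightarrow> dHRM a
     \<longrightarrow> (\<forall>w\<in>dfv f. \<exists>k\<in>dfv a. k \<le> w) \<longrightarrow>
     dtyped D (happ T f a) B \<and> dnormal (happ T f a) \<and> dHRM (happ T f a)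
     \<and> dfv (happ T f a) = dfv f \<union> dfv a)"

lemma hsubst_sound_DVar: "hsubst_sound T (DVar j) i u"
  unfolding hsubst_sound_def
proof (intro allI impI)
  fix G D D0 S
  assume t: "dtyped G (DVar j) S" and Gi: "G i = T" and D: "\<forall>j. D j = G (if j < i then j else Suc j)"
    and D0: "\<forall>j. D (j + i) = D0 j" and tu: "dtyped D0 u T" and nu: "dnormal u" and hu: "dHRM u"
  from t have S: "S = G j" by (cases rule: dtyped_DVarE) auto
  consider "j < i" | "j = i" | "i < j" by linarith
  then show "dtyped D (hsubst T (DVar j) i u) S \<and> dnormal (hsubst T (DVar j) i u)
    \<and> dHRM (hsubst T (DVar j) i u) \<and> dfv (hsubst T (DVar j) i u) = fv_subst (DVar j) i u"
  proof cases
    case 1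
    then have "D j = S" using D S by simp
    then show ?thesis using 1 by (auto simp: fv_subst_def intro: dtyped_DVar_eq)
  next
    case 2
    have "dtyped D (lift i 0 u) T" using dtyped_lift[OF tu, where k=0 and G'=D and n=i] D0 by simp
    moreover have "w \<in> dfv (lift i 0 u) \<longleftrightarrow> w \<in> fv_subst (DVar j) i u" for w
      using 2 by (auto simp: dfv_lift fv_subst_def image_iff intro: bexI[of _ "w - i"])
    ultimately show ?thesis using 2 S Gi dnormal_lift[OF nu] dHRM_lift[OF hu] by auto
  next
    case 3
    then have "D (j - 1) = S" using D[rule_format, of "j - 1"] S by auto
    then show ?thesis using 3 by (auto simp: fv_subst_def intro: dtyped_DVar_eq)
  qed
qed

lemma hsubst_sound_DLam:
  assumes IH: "hsubst_sound T t (Suc i) u"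
  shows "hsubst_sound T (DLam S' t) i u"
  unfolding hsubst_sound_def
proof (intro allI impI)
  fix G D D0 S
  assume tl: "dtyped G (DLam S' t) S" and Gi: "G i = T" and D: "\<forall>j. D j = G (if j < i then j else Suc j)"
    and D0: "\<forall>j. D (j + i) = D0 j" and tu: "dtyped D0 u T" and nl: "dnormal (DLam S' t)"
    and nu: "dnormal u" and hl: "dHRM (DLam S' t)" and hu: "dHRM u" and c: "subst_compatible (DLam S' t) i u"
  from tl obtain S2 where S: "S = Imp S' S2" and tt: "dtyped (case_nat S' G) t S2"
    by (cases rule: dtyped_DLamE) auto
  have D': "\<forall>j. case_nat S' D j = case_nat S' G (if j < Suc i then j else Suc j)"
  proof
    fix j show "case_nat S' D j = case_nat S' G (if j < Suc i then j else Suc j)"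
      using D by (cases j) auto
  qed
  have D0': "\<forall>j. case_nat S' D (j + Suc i) = D0 j" using D0 by simp
  have c': "subst_compatible t (Suc i) u"
    unfolding subst_compatible_def
  proof (intro ballI impI)
    fix w assume w: "w \<in> dfv t" "Suc i < w"
    then have "w - 1 \<in> dfv (DLam S' t)" "i < w - 1" by auto
    then obtain k where "k \<in> dfv u" "k + i + 1 \<le> w - 1" using c unfolding subst_compatible_def by blast
    then show "\<exists>k\<in>dfv u. k + Suc i + 1 \<le> w" using w(2) by (intro bexI[of _ k]) auto
  qed
  have "dnormal t" "dHRM t" "case_nat S' G (Suc i) = T" using nl hl Gi by auto
  then have R: "dtyped (case_nat S' D) (hsubst T t (Suc i) u) S2 \<and> dnormal (hsubst T t (Suc i) u)
      \<and> dHRM (hsubst T t (Suc i) u) \<and> dfv (hsubst T t (Suc i) u) = fv_subst t (Suc i) u"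
    using IH[unfolded hsubst_sound_def] tt D' D0' tu nu hu c' by blast
  moreover have "dfv (hsubst T (DLam S' t) i u) = fv_subst (DLam S' t) i u"
    using R by (auto simp: fv_subst_def)
  moreover have "0 \<in> dfv (hsubst T t (Suc i) u)" using R hl by (simp add: fv_subst_def)
  ultimately show "dtyped D (hsubst T (DLam S' t) i u) S \<and> dnormal (hsubst T (DLam S' t) i u)
    \<and> dHRM (hsubst T (DLam S' t) i u) \<and> dfv (hsubst T (DLam S' t) i u) = fv_subst (DLam S' t) i u"
    using S by (auto intro: dtLam)
qed

lemma hsubst_sound_DApp:
  assumes IH1: "hsubst_sound T t1 i u" and IH2: "hsubst_sound T t2 i u"
    and IH_happ: "head_var t1 = Some i \<Longrightarrow>
      happ_sound (result_type T (num_args t1)) (hsubst T t1 i u) (hsubst T t2 i u)"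
  shows "hsubst_sound T (DApp t1 t2) i u"
  unfolding hsubst_sound_def
proof (intro allI impI)
  fix G D D0 S
  assume ta: "dtyped G (DApp t1 t2) S" and Gi: "G i = T" and D: "\<forall>j. D j = G (if j < i then j else Suc j)"
    and D0: "\<forall>j. D (j + i) = D0 j" and tu: "dtyped D0 u T" and na: "dnormal (DApp t1 t2)"
    and nu: "dnormal u" and ha: "dHRM (DApp t1 t2)" and hu: "dHRM u" and c: "subst_compatible (DApp t1 t2) i u"
  from ta obtain A where t1: "dtyped G t1 (Imp A S)" and t2: "dtyped G t2 A"
    by (cases rule: dtyped_DAppE) auto
  have "dnormal t1" "dHRM t1" "dnormal t2" "dHRM t2" using na ha by auto
  with IH1 IH2 t1 t2 Gi D D0 tu nu hu subst_compatible_DApp[OF c]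
  have R1: "dtyped D (hsubst T t1 i u) (Imp A S) \<and> dnormal (hsubst T t1 i u)
      \<and> dHRM (hsubst T t1 i u) \<and> dfv (hsubst T t1 i u) = fv_subst t1 i u"
    and R2: "dtyped D (hsubst T t2 i u) A \<and> dnormal (hsubst T t2 i u)
      \<and> dHRM (hsubst T t2 i u) \<and> dfv (hsubst T t2 i u) = fv_subst t2 i u"
    unfolding hsubst_sound_def by blast+
  have dom: "\<forall>w\<in>dfv (hsubst T t1 i u). \<exists>k\<in>dfv (hsubst T t2 i u). k \<le> w"
    using dHRM_app_cond_fv_subst[OF ha c] R1 R2 by simp
  show "dtyped D (hsubst T (DApp t1 t2) i u) S \<and> dnormal (hsubst T (DApp t1 t2) i u)
    \<and> dHRM (hsubst T (DApp t1 t2) i u) \<and> dfv (hsubst T (DApp t1 t2) i u) = fv_subst (DApp t1 t2) i u"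
  proof (cases "head_var t1 = Some i")
    case True
    have rt: "result_type T (num_args t1) = Imp A S" using dtyped_head_var[OF t1 True] Gi by simp
    then have "happ_sound (Imp A S) (hsubst T t1 i u) (hsubst T t2 i u)" using IH_happ[OF True] by simp
    then have "dtyped D (happ (Imp A S) (hsubst T t1 i u) (hsubst T t2 i u)) S
      \<and> dnormal (happ (Imp A S) (hsubst T t1 i u) (hsubst T t2 i u))
      \<and> dHRM (happ (Imp A S) (hsubst T t1 i u) (hsubst T t2 i u))
      \<and> dfv (happ (Imp A S) (hsubst T t1 i u) (hsubst T t2 i u)) = dfv (hsubst T t1 i u) \<union> dfv (hsubst T t2 i u)"
      using R1 R2 dom unfolding happ_sound_def by blast
    then show ?thesis using True rt R1 R2 by (simp add: fv_subst_DApp)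
  next
    case False
    have "\<not> is_DLam (hsubst T t1 i u)" using not_is_DLam_hsubst[OF False] na by simp
    then show ?thesis using False R1 R2 dom by (auto simp: fv_subst_DApp intro: dtApp)
  qed
qed

lemma happ_sound_DLam:
  assumes IH: "hsubst_sound A b 0 a"
  shows "happ_sound (Imp A B) (DLam S b) a"
  unfolding happ_sound_def
proof (intro allI impI)
  fix D A' B'
  assume T: "Imp A B = Imp A' B'" and tf: "dtyped D (DLam S b) (Imp A B)"
    and ta: "dtyped D a A'" and nf: "dnormal (DLam S b)" and na: "dnormal a" and hf: "dHRM (DLam S b)"
    and ha: "dHRM a" and dom: "\<forall>w\<in>dfv (DLam S b). \<exists>k\<in>dfv a. k \<le> w"
  from T have AB: "A' = A" "B' = B" by auto
  from tf have tb: "dtyped (case_nat A D) b B" by (cases rule: dtyped_DLamE) auto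
  have cb: "subst_compatible b 0 a" unfolding subst_compatible_def
  proof (intro ballI impI)
    fix w assume "w \<in> dfv b" "0 < w"
    then have "w - 1 \<in> dfv (DLam S b)" by auto
    then obtain k where "k \<in> dfv a" "k \<le> w - 1" using dom by blast
    then show "\<exists>k\<in>dfv a. k + 0 + 1 \<le> w" using \<open>0 < w\<close> by (intro bexI[of _ k]) auto
  qed
  have "dnormal b" "dHRM b" using nf hf by auto
  then have R: "dtyped D (hsubst A b 0 a) B \<and> dnormal (hsubst A b 0 a) \<and> dHRM (hsubst A b 0 a)
      \<and> dfv (hsubst A b 0 a) = fv_subst b 0 a"
    using IH tb ta AB na ha cb unfolding hsubst_sound_def by fastforce
  have "0 \<in> dfv b" using hf by simp
  then have "dfv (hsubst A b 0 a) = dfv (DLam S b) \<union> dfv a" using R by (auto simp: fv_subst_def)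
  then show "dtyped D (happ (Imp A B) (DLam S b) a) B' \<and> dnormal (happ (Imp A B) (DLam S b) a)
    \<and> dHRM (happ (Imp A B) (DLam S b) a) \<and> dfv (happ (Imp A B) (DLam S b) a) = dfv (DLam S b) \<union> dfv a"
    using R AB by simp
qed

lemma happ_sound_not_DLam: "\<not> is_DLam f \<Longrightarrow> happ T f a = DApp f a \<Longrightarrow> happ_sound T f a"
  unfolding happ_sound_def by (auto intro: dtApp)

lemma hsubst_happ_sound: "hsubst_sound (T::'a form) t i u" "happ_sound (T'::'a form) f a"
proof (induct T t i u and T' f a rule: hsubst_happ.induct)
  case (1 T j i u) then show ?case by (rule hsubst_sound_DVar)
next
  case (2 T S t i u) then show ?case by (rule hsubst_sound_DLam)
next
  case (3 T t1 t2 i u) then show ?case by (cases "head_var t1 = Some i") (auto intro: hsubst_sound_DApp)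
next
  case (4 A B S b a) then show ?case by (rule happ_sound_DLam)
next
  case ("5_1" v f a) then show ?case by (simp add: happ_sound_def)
next
  case ("5_2" T v a) then show ?case by (intro happ_sound_not_DLam) (cases T, auto)
next
  case ("5_3" T v va a) then show ?case by (intro happ_sound_not_DLam) (cases T, auto)
qed

lemma happ_closed:
  assumes "dtyped G f (Imp A B)" "dtyped G a A" "dnormal f" "dnormal a" "dHRM f" "dHRM a"
    and "dfv f = {}" "dfv a = {}"
  shows "dtyped G (happ (Imp A B) f a) B \<and> dnormal (happ (Imp A B) f a)
    \<and> dHRM (happ (Imp A B) f a) \<and> dfv (happ (Imp A B) f a) = {}"
  using hsubst_happ_sound(2)[of "Imp A B" f a] assms unfolding happ_sound_def by auto

lemma ctype_db_inhabited: "ctype c phi \<Longrightarrow> \<exists>t. dtyped G t phi \<and> dnormal t \<and> dHRM t \<and> dfv t = {}"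
proof (induct rule: ctype.induct)
  case (ctB chi psi phi)
  let ?t = "DLam (Imp chi psi) (DLam (Imp phi chi) (DLam phi (DApp (DVar 2) (DApp (DVar 1) (DVar 0)))))"
  have "dtyped G ?t (Imp (Imp chi psi) (Imp (Imp phi chi) (Imp phi psi)))"
    by (intro dtLam dtApp[where A=chi] dtApp[where A=phi] dtyped_DVar_eq) simp_all
  moreover have "dnormal ?t \<and> dHRM ?t \<and> dfv ?t = {}" by auto
  ultimately show ?case by blast
next
  case (ctB' phi chi psi)
  let ?t = "DLam (Imp phi chi) (DLam (Imp chi psi) (DLam phi (DApp (DVar 1) (DApp (DVar 2) (DVar 0)))))"
  have "dtyped G ?t (Imp (Imp phi chi) (Imp (Imp chi psi) (Imp phi psi)))"
    by (intro dtLam dtApp[where A=chi] dtApp[where A=phi] dtyped_DVar_eq) simp_all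
  moreover have "dnormal ?t \<and> dHRM ?t \<and> dfv ?t = {}" by auto
  ultimately show ?case by blast
next
  case (ctI phi)
  have "dtyped G (DLam phi (DVar 0)) (Imp phi phi)"
    by (intro dtLam dtyped_DVar_eq) simp
  then show ?case by force
next
  case (ctW phi chi)
  let ?t = "DLam (Imp phi (Imp phi chi)) (DLam phi (DApp (DApp (DVar 1) (DVar 0)) (DVar 0)))"
  have "dtyped G ?t (Imp (Imp phi (Imp phi chi)) (Imp phi chi))"
    by (intro dtLam dtApp[where A=phi] dtyped_DVar_eq) simp_all
  moreover have "dnormal ?t \<and> dHRM ?t \<and> dfv ?t = {}" by auto
  ultimately show ?case by blast
next
  case (ctApp M chi psi N)
  then obtain f a where "dtyped G f (Imp chi psi)" "dnormal f" "dHRM f" "dfv f = {}"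
    and "dtyped G a chi" "dnormal a" "dHRM a" "dfv a = {}" by blast
  then show ?case using happ_closed by blast
qed

definition fresh_var :: "('v \<Rightarrow> nat) \<Rightarrow> ('v \<Rightarrow> 'a form) \<Rightarrow> nat \<Rightarrow> 'a form \<Rightarrow> 'v" where
  "fresh_var ord Om c S = (SOME v. Om v = S \<and> c \<le> ord v)"

text \<open>The counter \<open>c\<close> bounds the orders of the variables used so far strictly from above and
  is returned updated, so that inner binders receive greater variables.\<close>

fun name_db :: "('v \<Rightarrow> nat) \<Rightarrow> ('v \<Rightarrow> 'a form) \<Rightarrow> (nat \<Rightarrow> 'v) \<Rightarrow> nat \<Rightarrow> 'a dbterm
    \<Rightarrow> 'v lterm \<times> nat" where
  "name_db ord Om env c (DVar j) = (Var (env j), c)"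
| "name_db ord Om env c (DLam S t) =
    (let v = fresh_var ord Om c S; r = name_db ord Om (case_nat v env) (Suc (ord v)) t
     in (Lam v (fst r), snd r))"
| "name_db ord Om env c (DApp a b) =
    (let r1 = name_db ord Om env c a; r2 = name_db ord Om env (snd r1) b
     in (App (fst r1) (fst r2), snd r2))"

locale variable_supply =
  fixes ord :: "'v \<Rightarrow> nat" and Om :: "'v \<Rightarrow> 'a form"
  assumes inj_ord: "inj ord" and infinite_vars_of_type: "\<forall>S. infinite (Om -` {S})"
begin

lemma fresh_var_spec: "Om (fresh_var ord Om c S) = S \<and> c \<le> ord (fresh_var ord Om c S)"
proof -
  have "\<exists>v. Om v = S \<and> c \<le> ord v"
  proof (rule ccontr)
    assume "\<nexists>v. Om v = S \<and> c \<le> ord v"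
    then have "ord ` (Om -` {S}) \<subseteq> {..<c}" by (auto simp: not_le)
    then have "finite (ord ` (Om -` {S}))" using finite_subset by blast
    then have "finite (Om -` {S})" using inj_ord by (metis finite_imageD inj_on_subset subset_UNIV)
    then show False using infinite_vars_of_type by blast
  qed
  then show ?thesis unfolding fresh_var_def by (rule someI_ex)
qed

lemma name_db_binders:
  "c \<le> snd (name_db ord Om env c t)
   \<and> (\<forall>x\<in>set (bvs (fst (name_db ord Om env c t))). c \<le> ord x \<and> ord x < snd (name_db ord Om env c t))
   \<and> distinct (map ord (bvs (fst (name_db ord Om env c t))))"
proof (induct t arbitrary: env c)
  case (DVar j) then show ?case by simp
next
  case (DLam S t)
  define v where "v = fresh_var ord Om c S"
  have "c \<le> ord v" using fresh_var_spec v_def by blast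
  with DLam[where env="case_nat v env" and c="Suc (ord v)"] show ?case
    by (auto simp: Let_def v_def[symmetric])
next
  case (DApp a b)
  from DApp(1)[where env=env and c=c] DApp(2)[where env=env and c="snd (name_db ord Om env c a)"]
  show ?case by (auto simp: Let_def) fastforce+
qed

lemma snd_name_db_ge: "c \<le> snd (name_db ord Om env c t)"
  using name_db_binders by blast

lemma bound_case_nat:
  assumes "\<forall>j\<in>dfv (DLam S t). ord (env j) < c" and "c \<le> ord v"
  shows "\<forall>j\<in>dfv t. ord (case_nat v env j) < Suc (ord v)"
proof
  fix j assume "j \<in> dfv t" then show "ord (case_nat v env j) < Suc (ord v)"
    using assms by (cases j) fastforce+
qed

lemma fv_name_db: "\<forall>j\<in>dfv t. ord (env j) < c \<Longrightarrow> fv (fst (name_db ord Om env c t)) = env ` dfv t"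
proof (induct t arbitrary: env c)
  case (DVar j) then show ?case by simp
next
  case (DLam S t)
  define v where "v = fresh_var ord Om c S"
  have cv: "c \<le> ord v" using fresh_var_spec v_def by blast
  have IH: "fv (fst (name_db ord Om (case_nat v env) (Suc (ord v)) t)) = case_nat v env ` dfv t"
    using DLam(1) bound_case_nat[OF DLam(2) cv] by blast
  have "case_nat v env ` dfv t - {v} = env ` dfv (DLam S t)"
  proof (rule set_eqI, rule iffI)
    fix y assume "y \<in> case_nat v env ` dfv t - {v}"
    then obtain j where "j \<in> dfv t" "y = case_nat v env j" "y \<noteq> v" by auto
    then show "y \<in> env ` dfv (DLam S t)" by (cases j) auto
  next
    fix y assume "y \<in> env ` dfv (DLam S t)"
    then obtain j where j: "Suc j \<in> dfv t" "y = env j" by auto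
    then have "ord y < c" using DLam(2) by auto
    then have "y \<noteq> v" using cv by auto
    then show "y \<in> case_nat v env ` dfv t - {v}" using j by (auto intro: image_eqI[of _ _ "Suc j"])
  qed
  then show ?case using IH by (simp add: Let_def v_def[symmetric])
next
  case (DApp a b)
  have "\<forall>j\<in>dfv b. ord (env j) < snd (name_db ord Om env c a)"
    using DApp(3) snd_name_db_ge by (auto intro: order_less_le_trans)
  then show ?case using DApp by (auto simp: Let_def)
qed

lemma beta_normal_name_db: "dnormal t \<Longrightarrow> beta_normal (fst (name_db ord Om env c t))"
proof (induct t arbitrary: env c)
  case (DApp a b)
  then show ?case by (cases a) (simp_all add: Let_def)
qed (auto simp: Let_def)

text \<open>Larger indices are bound further out, hence get smaller variables.\<close>

definition antitone_env :: "(nat \<Rightarrow> 'v) \<Rightarrow> nat set \<Rightarrow> bool" where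
  "antitone_env env F \<longleftrightarrow> (\<forall>j\<in>F. \<forall>k\<in>F. j \<le> k \<longrightarrow> ord (env k) \<le> ord (env j))"

lemma antitone_env_case_nat:
  assumes "antitone_env env (dfv (DLam S t))" and "\<forall>j\<in>dfv (DLam S t). ord (env j) < c" and "c \<le> ord v"
  shows "antitone_env (case_nat v env) (dfv t)"
  unfolding antitone_env_def
proof (intro ballI impI)
  fix j k assume jk: "j \<in> dfv t" "k \<in> dfv t" "j \<le> k"
  show "ord (case_nat v env k) \<le> ord (case_nat v env j)"
  proof (cases j)
    case 0 then show ?thesis using jk assms(2,3) by (cases k) fastforce+
  next
    case (Suc j')
    then obtain k' where "k = Suc k'" using jk by (cases k) auto
    then show ?thesis using Suc jk assms(1) unfolding antitone_env_def by auto
  qed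
qed

lemma antitone_env_subset: "antitone_env env F \<Longrightarrow> F' \<subseteq> F \<Longrightarrow> antitone_env env F'"
  unfolding antitone_env_def by blast

lemma HRM_name_db:
  "dHRM t \<Longrightarrow> \<forall>j\<in>dfv t. ord (env j) < c \<Longrightarrow> antitone_env env (dfv t)
   \<Longrightarrow> HRM ord (fst (name_db ord Om env c t))"
proof (induct t arbitrary: env c)
  case (DVar j) then show ?case by simp
next
  case (DLam S t)
  define v where "v = fresh_var ord Om c S"
  have cv: "c \<le> ord v" using fresh_var_spec v_def by blast
  note bound = bound_case_nat[OF DLam(3) cv]
  have "HRM ord (fst (name_db ord Om (case_nat v env) (Suc (ord v)) t))"
    using DLam(1,2) bound antitone_env_case_nat[OF DLam(4,3) cv] by simp
  moreover have "fv (fst (name_db ord Om (case_nat v env) (Suc (ord v)) t)) = case_nat v env ` dfv t"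
    using fv_name_db bound by blast
  moreover have "v \<in> case_nat v env ` dfv t" using DLam(2) by (auto intro: image_eqI[of _ _ 0])
  ultimately show ?case using bound by (auto simp: Let_def v_def[symmetric])
next
  case (DApp a b)
  let ?c' = "snd (name_db ord Om env c a)"
  have ba: "\<forall>j\<in>dfv a. ord (env j) < c" and bb: "\<forall>j\<in>dfv b. ord (env j) < ?c'"
    using DApp(4) snd_name_db_ge by (auto intro: order_less_le_trans)
  have aa: "antitone_env env (dfv a)" "antitone_env env (dfv b)"
    using DApp(5) antitone_env_subset by auto
  have "\<forall>x\<in>env ` dfv a. \<exists>y\<in>env ` dfv b. ord x \<le> ord y"
  proof
    fix x assume "x \<in> env ` dfv a"
    then obtain j where j: "j \<in> dfv a" "x = env j" by auto
    then obtain k where k: "k \<in> dfv b" "k \<le> j" using DApp(3) by auto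
    then have "ord (env j) \<le> ord (env k)" using DApp(5) j unfolding antitone_env_def by auto
    then show "\<exists>y\<in>env ` dfv b. ord x \<le> ord y" using k j by auto
  qed
  then show ?case using DApp(1,2,3) ba bb aa fv_name_db[OF ba] fv_name_db[OF bb] by (simp add: Let_def)
qed

lemma typed_name_db:
  "dtyped G t S \<Longrightarrow> dHRM t \<Longrightarrow> \<forall>j\<in>dfv t. ord (env j) < c \<Longrightarrow> antitone_env env (dfv t)
   \<Longrightarrow> \<forall>j\<in>dfv t. Om (env j) = G j \<Longrightarrow> typed ord Om (fst (name_db ord Om env c t)) S"
proof (induct arbitrary: env c rule: dtyped.induct)
  case (dtVar G j) then show ?case using typed.tVar[of ord Om "env j"] by simp
next
  case (dtLam S G t T)
  define v where "v = fresh_var ord Om c S"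
  have cv: "c \<le> ord v" "Om v = S" using fresh_var_spec v_def by blast+
  have "\<forall>j\<in>dfv t. Om (case_nat v env j) = case_nat S G j"
  proof
    fix j assume "j \<in> dfv t" then show "Om (case_nat v env j) = case_nat S G j"
      using dtLam(6) cv by (cases j) auto
  qed
  then have "typed ord Om (fst (name_db ord Om (case_nat v env) (Suc (ord v)) t)) T"
    using dtLam(2,3) bound_case_nat[OF dtLam(4) cv(1)] antitone_env_case_nat[OF dtLam(5,4) cv(1)] by simp
  moreover have "HRM ord (fst (name_db ord Om env c (DLam S t)))" using HRM_name_db dtLam(3-5) by blast
  ultimately show ?case using cv by (auto simp: Let_def v_def[symmetric] intro: typed.tLam[where x=v, simplified cv])
next
  case (dtApp G a A B b)
  have ba: "\<forall>j\<in>dfv a. ord (env j) < c" and bb: "\<forall>j\<in>dfv b. ord (env j) < snd (name_db ord Om env c a)"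
    using dtApp(6) snd_name_db_ge by (auto intro: order_less_le_trans)
  have "antitone_env env (dfv a)" "antitone_env env (dfv b)" using dtApp(7) antitone_env_subset by auto
  with dtApp ba bb
  have "typed ord Om (fst (name_db ord Om env c a)) (Imp A B)"
    and "typed ord Om (fst (name_db ord Om env (snd (name_db ord Om env c a)) b)) A" by simp_all
  moreover have "HRM ord (fst (name_db ord Om env c (DApp a b)))" using HRM_name_db dtApp(5-7) by blast
  ultimately show ?case by (simp add: Let_def typed.tApp)
qed

lemma NF_inhabited_if_db_inhabited:
  assumes "dtyped G t S" "dnormal t" "dHRM t" "dfv t = {}"
  shows "NF_inhabited ord Om S"
proof -
  define M where "M = fst (name_db ord Om (\<lambda>_. undefined) 0 t)"
  have "distinct (bvs M)" using name_db_binders distinct_map M_def by blast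
  moreover have "fv M = {}" using fv_name_db[of t "\<lambda>_. undefined" 0] assms(4) M_def by simp
  moreover have "beta_normal M" using beta_normal_name_db assms(2) M_def by blast
  moreover have "typed ord Om M S" using typed_name_db[OF assms(1,3)] assms(4) M_def by (simp add: antitone_env_def)
  ultimately show ?thesis unfolding NF_inhabited_def wf_term_def by blast
qed

end

theorem lemma1p7:
  fixes ord :: "'v \<Rightarrow> nat" and Omega :: "'v \<Rightarrow> 'a form" and phi :: "'a form"
  assumes "inj ord"
    and "\<forall>psi. infinite (Omega -` {psi})"
    and "BBIW_provable phi"
  shows "NF_inhabited ord Omega phi"
proof -
  interpret variable_supply ord Omega using assms(1,2) by unfold_locales
  obtain c where "ctype c phi" using assms(3) unfolding BBIW_provable_def by blast
  then obtain t where "dtyped (\<lambda>_. phi) t phi" "dnormal t" "dHRM t" "dfv t = {}"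
    using ctype_db_inhabited by blast
  then show ?thesis by (rule NF_inhabited_if_db_inhabited)
qed

end
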